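(* Consider the nonrepetitive game over a symbol set $S$ with $|S|\geq 6$. Then for every $n\geq1$ Ann has a strategy such that, whatever Ben plays, the sequence $s_1,\ldots,s_n$ built in the first $n$ moves contains no repetition of size greater than $1$.
   Context: A repetition of size $h\geq1$ in a sequence is a block of consecutive terms of the form $x_1\ldots x_h x_1\ldots x_h$. The nonrepetitive game over a symbol set $S$ is played by two players, Ann and Ben, who alternately (Ann first) choose a symbol from $S$ and append it to the end of the sequence built so far (initially empty); nothing is ever erased. Ann tries to avoid repetitions, Ben tries to create them. *)

theory Defs
  imports Main
begin

definition has_repetition_of_size :: "'a list \<Rightarrow> nat \<Rightarrow> bool" where
  "has_repetition_of_size xs h \<longleftrightarrow> h \<ge> 1 \<and>
     (\<exists>i. i + 2 * h \<le> length xs \<and> take h (drop i xs) = take h (drop (i + h) xs))"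

text \<open>Strategies map the current sequence (history) to the next symbol.
  The sequence after k moves; Ann moves when the current length is even
  (moves 1,3,5,...), Ben when it is odd.\<close>
fun play :: "('a list \<Rightarrow> 'a) \<Rightarrow> ('a list \<Rightarrow> 'a) \<Rightarrow> nat \<Rightarrow> 'a list" where
  "play ann ben 0 = []"
| "play ann ben (Suc k) =
     (let h = play ann ben k in h @ [if even (length h) then ann h else ben h])"

end

theory Submission
  imports Defs
begin

(* Proof idea (a counting argument combined with determinacy of finite games).
   Ann only ever plays symbols from a fixed 6-element set T \<subseteq> S.  Fix any Ben
   strategy \<beta>.  A word r over T then determines the play  respond \<beta> r  of length
   2 |r|  in which Ann plays r and Ben answers with \<beta>.  Let g m be the number of
   words of length m whose play contains no repetition of size > 1.  If such a
   word is extended by one symbol and the play acquires a repetition of size h,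
   the repetition ends at the end of the play, so Ann's last h div 2 symbols are
   copies of earlier symbols: the extension is determined by a surviving prefix
   of length m + 1 - h div 2.  Hence  g (m+1) \<ge> 6 g m - 2 (g 1 + ... + g m),
   which by induction gives  g (m+1) \<ge> 3 g m > 0.  So no Ben strategy defeats
   every Ann play of any given length, and the recursive characterisation
   ann_wins of the finite game turns this into a winning strategy for Ann. *)

section \<open>Repetition-free sequences\<close>

definition rep_free :: "'a list \<Rightarrow> bool" where
  "rep_free s \<longleftrightarrow> (\<forall>k>1. \<not> has_repetition_of_size s k)"

lemma rep_free_Nil: "rep_free []"
  by (auto simp: rep_free_def has_repetition_of_size_def)

lemma take_drop_take: "i + k \<le> n \<Longrightarrow> take k (drop i (take n s)) = take k (drop i s)"
  by (simp add: drop_take take_take min_def)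

lemma has_repetition_of_size_take:
  "has_repetition_of_size (take n s) k \<Longrightarrow> has_repetition_of_size s k"
  unfolding has_repetition_of_size_def
proof (elim conjE exE)
  fix i assume k: "1 \<le> k" and i: "i + 2 * k \<le> length (take n s)"
    and eq: "take k (drop i (take n s)) = take k (drop (i + k) (take n s))"
  then have "take k (drop i s) = take k (drop (i + k) s)" by (simp add: take_drop_take)
  then show "1 \<le> k \<and> (\<exists>i. i + 2 * k \<le> length s \<and> take k (drop i s) = take k (drop (i + k) s))"
    using k i by auto
qed

lemma rep_free_take: "rep_free s \<Longrightarrow> rep_free (take n s)"
  unfolding rep_free_def using has_repetition_of_size_take by blast

lemma repetition_reaches_past_prefix:
  assumes free: "rep_free (take n s)" and h: "h > 1"
    and i: "i + 2 * h \<le> length s" and eq: "take h (drop i s) = take h (drop (i + h) s)"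
  shows "n < i + 2 * h"
proof (rule ccontr)
  assume short: "\<not> n < i + 2 * h"
  have "take h (drop i (take n s)) = take h (drop (i + h) (take n s))"
    using eq short by (simp add: take_drop_take)
  then have "has_repetition_of_size (take n s) h"
    using h i short unfolding has_repetition_of_size_def by auto
  then show False using free h unfolding rep_free_def by blast
qed

lemma repetition_nth:
  assumes "take h (drop i s) = take h (drop (i + h) s)" "i + 2 * h \<le> length s" "d < h"
  shows "s ! (i + d) = s ! (i + h + d)"
proof -
  have "take h (drop i s) ! d = take h (drop (i + h) s) ! d" using assms(1) by simp
  then show ?thesis using assms(2,3) by (simp add: nth_take nth_drop add.assoc)
qed

section \<open>The play produced by a word of Ann's symbols\<close>

text \<open>If Ann plays the symbols of r in turn and Ben follows \<beta>, the game
  produces  respond \<beta> r.\<close>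
definition respond :: "('a list \<Rightarrow> 'a) \<Rightarrow> 'a list \<Rightarrow> 'a list" where
  "respond \<beta> r = foldl (\<lambda>u x. u @ [x, \<beta> (u @ [x])]) [] r"

lemma respond_Nil [simp]: "respond \<beta> [] = []"
  by (simp add: respond_def)

lemma respond_snoc [simp]:
  "respond \<beta> (r @ [x]) = respond \<beta> r @ [x, \<beta> (respond \<beta> r @ [x])]"
  by (simp add: respond_def)

lemma length_respond [simp]: "length (respond \<beta> r) = 2 * length r"
  by (induction r rule: rev_induct) auto

lemma respond_append: "\<exists>w. respond \<beta> (r @ s) = respond \<beta> r @ w"
proof (induction s rule: rev_induct)
  case (snoc x s)
  then show ?case by (metis append.assoc respond_snoc)
qed simp

lemma take_respond: "i \<le> length r \<Longrightarrow> take (2 * i) (respond \<beta> r) = respond \<beta> (take i r)"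
  using respond_append[of \<beta> "take i r" "drop i r"] by auto

lemma nth_respond_even: "l < length r \<Longrightarrow> respond \<beta> r ! (2 * l) = r ! l"
proof -
  assume l: "l < length r"
  have "respond \<beta> r ! (2 * l) = take (2 * Suc l) (respond \<beta> r) ! (2 * l)" by simp
  also have "\<dots> = respond \<beta> (take l r @ [r ! l]) ! (2 * l)"
    using l by (simp only: take_respond take_Suc_conv_app_nth)
  also have "\<dots> = r ! l" using l by (simp add: nth_append)
  finally show ?thesis .
qed

lemma nth_respond_take:
  "\<lbrakk>j < 2 * l; l \<le> length r\<rbrakk> \<Longrightarrow> respond \<beta> r ! j = respond \<beta> (take l r) ! j"
  by (metis nth_take take_respond)

section \<open>Counting the surviving words\<close>

definition survivors :: "('a list \<Rightarrow> 'a) \<Rightarrow> 'a set \<Rightarrow> nat \<Rightarrow> 'a list set" where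
  "survivors \<beta> T m = {r. set r \<subseteq> T \<and> length r = m \<and> rep_free (respond \<beta> r)}"

text \<open>Words of length m + 1 whose prefix of length m + 1 - h div 2 survives and
  whose later symbols copy the play h positions back; they contain every
  extension of a survivor that is killed by a repetition of size h.\<close>
definition blocked :: "('a list \<Rightarrow> 'a) \<Rightarrow> 'a set \<Rightarrow> nat \<Rightarrow> nat \<Rightarrow> 'a list set" where
  "blocked \<beta> T m h = {r. set r \<subseteq> T \<and> length r = Suc m
      \<and> take (Suc m - h div 2) r \<in> survivors \<beta> T (Suc m - h div 2)
      \<and> (\<forall>l. Suc m - h div 2 \<le> l \<and> l \<le> m \<longrightarrow> h \<le> 2 * l \<and> r ! l = respond \<beta> r ! (2 * l - h))}"

lemma finite_survivors: "finite T \<Longrightarrow> finite (survivors \<beta> T m)"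
  unfolding survivors_def
  by (rule finite_subset[OF _ finite_lists_length_eq[of T m]]) auto

lemma finite_blocked: "finite T \<Longrightarrow> finite (blocked \<beta> T m h)"
  unfolding blocked_def
  by (rule finite_subset[OF _ finite_lists_length_eq[of T "Suc m"]]) auto

lemma survivors_0: "survivors \<beta> T 0 = {[]}"
  unfolding survivors_def using rep_free_Nil by auto

lemma survivors_take:
  assumes "r \<in> survivors \<beta> T m" "i \<le> m"
  shows "take i r \<in> survivors \<beta> T i"
proof -
  have "respond \<beta> (take i r) = take (2 * i) (respond \<beta> r)"
    using assms by (simp add: survivors_def take_respond)
  then show ?thesis
    using assms rep_free_take set_take_subset[of i r] unfolding survivors_def by auto
qed

text \<open>Key structural fact: if the play of r survives but that of r @ [x] does
  not, some repetition of size h with 2 \<le> h \<le> m + 1 ends in the last round,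
  so Ann's symbols in the last h div 2 rounds repeat the play h positions back.\<close>
lemma killed_extension_copies:
  assumes free: "rep_free (respond \<beta> r)" and killed: "\<not> rep_free (respond \<beta> (r @ [x]))"
    and m: "length r = m"
  shows "\<exists>h. 2 \<le> h \<and> h \<le> Suc m \<and> (\<forall>l. Suc m - h div 2 \<le> l \<and> l \<le> m \<longrightarrow>
            h \<le> 2 * l \<and> (r @ [x]) ! l = respond \<beta> (r @ [x]) ! (2 * l - h))"
proof -
  let ?s = "respond \<beta> (r @ [x])"
  obtain h i where h: "h > 1" and i: "i + 2 * h \<le> length ?s"
    and eq: "take h (drop i ?s) = take h (drop (i + h) ?s)"
    using killed unfolding rep_free_def has_repetition_of_size_def by blast
  have "take (2 * m) ?s = respond \<beta> r" using m by (simp add: take_respond)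
  then have late: "2 * m < i + 2 * h"
    using repetition_reaches_past_prefix[OF _ h i eq] free by simp
  have len: "length ?s = 2 * m + 2" using m by simp
  have copies: "h \<le> 2 * l \<and> (r @ [x]) ! l = ?s ! (2 * l - h)"
    if l: "Suc m - h div 2 \<le> l" "l \<le> m" for l
  proof -
    have lo: "i + h \<le> 2 * l" and hi: "2 * l < i + 2 * h" using l i len late h by linarith+
    have "?s ! (i + (2 * l - i - h)) = ?s ! (i + h + (2 * l - i - h))"
      by (rule repetition_nth[OF eq i]) (use lo hi in linarith)
    then have "?s ! (2 * l - h) = ?s ! (2 * l)" using lo by (simp add: add.commute)
    moreover have "?s ! (2 * l) = (r @ [x]) ! l" using l m by (intro nth_respond_even) simp
    ultimately show ?thesis using lo by simp
  qed
  show ?thesis using h i len copies by (intro exI[of _ h]) auto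
qed

lemma killed_extension_blocked:
  assumes r: "r \<in> survivors \<beta> T m" and x: "x \<in> T"
    and killed: "r @ [x] \<notin> survivors \<beta> T (Suc m)"
  shows "\<exists>h\<in>{2..Suc m}. r @ [x] \<in> blocked \<beta> T m h"
proof -
  have sr: "set r \<subseteq> T" and lr: "length r = m" and fr: "rep_free (respond \<beta> r)"
    using r unfolding survivors_def by auto
  have "\<not> rep_free (respond \<beta> (r @ [x]))" using killed sr x lr unfolding survivors_def by auto
  then obtain h where h2: "2 \<le> h" and hm: "h \<le> Suc m" and copies: "\<forall>l. Suc m - h div 2 \<le> l \<and> l \<le> m
      \<longrightarrow> h \<le> 2 * l \<and> (r @ [x]) ! l = respond \<beta> (r @ [x]) ! (2 * l - h)"
    using killed_extension_copies[OF fr _ lr] by blast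
  have Lm: "Suc m - h div 2 \<le> m" using h2 by simp
  then have "take (Suc m - h div 2) (r @ [x]) = take (Suc m - h div 2) r" using lr by simp
  moreover have "take (Suc m - h div 2) r \<in> survivors \<beta> T (Suc m - h div 2)"
    using survivors_take[OF r Lm] .
  ultimately have "take (Suc m - h div 2) (r @ [x]) \<in> survivors \<beta> T (Suc m - h div 2)" by simp
  then have "r @ [x] \<in> blocked \<beta> T m h" using sr x lr copies unfolding blocked_def by auto
  then show ?thesis using h2 hm by auto
qed

text \<open>A blocked word is determined by its surviving prefix: the remaining
  symbols are copied, one after the other, from the play so far.\<close>
lemma blocked_determined_by_prefix:
  assumes r1: "r1 \<in> blocked \<beta> T m h" and r2: "r2 \<in> blocked \<beta> T m h" and h: "2 \<le> h"
    and prefix: "take (Suc m - h div 2) r1 = take (Suc m - h div 2) r2"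
  shows "r1 = r2"
proof -
  let ?L = "Suc m - h div 2"
  have len1: "length r1 = Suc m" and len2: "length r2 = Suc m"
    using r1 r2 unfolding blocked_def by auto
  have "?L \<le> Suc m" by simp
  then have "take (Suc m) r1 = take (Suc m) r2"
  proof (induction rule: dec_induct)
    case base
    then show ?case using prefix .
  next
    case (step l)
    have lm: "l \<le> m" using step.hyps by simp
    have hl: "h \<le> 2 * l" and c1: "r1 ! l = respond \<beta> r1 ! (2 * l - h)"
      and c2: "r2 ! l = respond \<beta> r2 ! (2 * l - h)"
      using r1 r2 step.hyps lm unfolding blocked_def by auto
    have j: "2 * l - h < 2 * l" using hl h by simp
    have "r1 ! l = respond \<beta> (take l r1) ! (2 * l - h)"
      unfolding c1 by (rule nth_respond_take[OF j]) (use lm len1 in simp)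
    also have "\<dots> = r2 ! l"
      unfolding c2 step.IH by (rule nth_respond_take[OF j, symmetric]) (use lm len2 in simp)
    finally show ?case using step.IH lm len1 len2 by (simp add: take_Suc_conv_app_nth)
  qed
  then show ?thesis using len1 len2 by simp
qed

lemma card_blocked:
  assumes "finite T" "2 \<le> h"
  shows "card (blocked \<beta> T m h) \<le> card (survivors \<beta> T (Suc m - h div 2))"
proof (rule card_inj_on_le[where f = "take (Suc m - h div 2)"])
  show "inj_on (take (Suc m - h div 2)) (blocked \<beta> T m h)"
    unfolding inj_on_def using blocked_determined_by_prefix assms(2) by blast
  show "take (Suc m - h div 2) ` blocked \<beta> T m h \<subseteq> survivors \<beta> T (Suc m - h div 2)"
    unfolding blocked_def by auto
qed (rule finite_survivors[OF assms(1)])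

text \<open>Each prefix length m + 1 - j arises from the two sizes h = 2 j, 2 j + 1.\<close>
lemma sum_over_half_sizes:
  fixes f :: "nat \<Rightarrow> nat"
  shows "(\<Sum>h\<in>{2..Suc m}. f (Suc m - h div 2)) \<le> 2 * (\<Sum>i\<in>{1..m}. f i)"
proof -
  have doubled: "(\<Sum>h\<in>{2..2 * M + 1}. g (h div 2)) = 2 * (\<Sum>j\<in>{1..M}. g j)"
    for g :: "nat \<Rightarrow> nat" and M
  proof (induction M)
    case (Suc M)
    have "{2..2 * Suc M + 1} = insert (2 * M + 3) (insert (2 * M + 2) {2..2 * M + 1})" by auto
    then show ?case using Suc by simp
  qed simp
  have "(\<Sum>h\<in>{2..Suc m}. f (Suc m - h div 2)) \<le> (\<Sum>h\<in>{2..2 * m + 1}. f (Suc m - h div 2))"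
    by (rule sum_mono2) auto
  also have "\<dots> = 2 * (\<Sum>j\<in>{1..m}. f (Suc m - j))"
    by (rule doubled)
  also have "(\<Sum>j\<in>{1..m}. f (Suc m - j)) = (\<Sum>i\<in>{1..m}. f i)"
    using sum.atLeastAtMost_rev[of f 1 m] by simp
  finally show ?thesis .
qed

lemma survivors_recurrence:
  assumes fin: "finite T"
  shows "card T * card (survivors \<beta> T m)
           \<le> card (survivors \<beta> T (Suc m)) + 2 * (\<Sum>i\<in>{1..m}. card (survivors \<beta> T i))"
proof -
  let ?G = "survivors \<beta> T" and ?B = "blocked \<beta> T m"
  let ?E = "(\<lambda>(r, x). r @ [x]) ` (?G m \<times> T)"
  have "inj_on (\<lambda>(r, x). r @ [x]) (?G m \<times> T)" by (auto simp: inj_on_def)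
  then have cardE: "card ?E = card (?G m) * card T"
    by (simp add: card_image card_cartesian_product)
  have "?E - ?G (Suc m) \<subseteq> (\<Union>h\<in>{2..Suc m}. ?B h)"
    using killed_extension_blocked by fastforce
  then have "card (?E - ?G (Suc m)) \<le> card (\<Union>h\<in>{2..Suc m}. ?B h)"
    by (rule card_mono[rotated]) (simp add: finite_blocked[OF fin])
  also have "\<dots> \<le> (\<Sum>h\<in>{2..Suc m}. card (?B h))" by (rule card_UN_le) simp
  also have "\<dots> \<le> (\<Sum>h\<in>{2..Suc m}. card (?G (Suc m - h div 2)))"
    by (rule sum_mono) (use card_blocked[OF fin] in auto)
  also have "\<dots> \<le> 2 * (\<Sum>i\<in>{1..m}. card (?G i))" by (rule sum_over_half_sizes)
  finally have killed: "card (?E - ?G (Suc m)) \<le> 2 * (\<Sum>i\<in>{1..m}. card (?G i))" .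
  have "card ?E \<le> card (?E \<inter> ?G (Suc m)) + card (?E - ?G (Suc m))"
    by (metis Int_Diff_Un card_Un_le)
  moreover have "card (?E \<inter> ?G (Suc m)) \<le> card (?G (Suc m))"
    by (rule card_mono) (auto simp: finite_survivors[OF fin])
  ultimately show ?thesis using cardE killed by (simp add: mult.commute)
qed

text \<open>With at least 6 symbols the survivors at least triple at every length,
  so there are survivors of every length.\<close>
lemma survivors_nonempty:
  assumes fin: "finite T" and six: "6 \<le> card T"
  shows "survivors \<beta> T N \<noteq> {}"
proof -
  let ?g = "\<lambda>i. card (survivors \<beta> T i)"
  have g0: "?g 0 = 1" by (simp add: survivors_0)
  have rec: "6 * ?g m \<le> ?g (Suc m) + 2 * (\<Sum>i\<in>{1..m}. ?g i)" for m
    using survivors_recurrence[OF fin, of \<beta> m] mult_le_mono1[OF six, of "?g m"] by linarith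
  have growth: "2 * (\<Sum>i\<in>{1..m}. ?g i) \<le> 3 * ?g m \<and> 3 * ?g m \<le> ?g (Suc m)" for m
  proof (induction m)
    case 0
    then show ?case using rec[of 0] g0 by simp
  next
    case (Suc m)
    then show ?case using rec[of m] rec[of "Suc m"] by simp
  qed
  have "?g m \<ge> 1" for m
  proof (induction m)
    case (Suc m)
    then show ?case using growth[of m] by linarith
  qed (use g0 in simp)
  then show ?thesis by (metis card.empty not_one_le_zero)
qed

section \<open>The game and its determinacy\<close>

primrec ann_wins :: "'a set \<Rightarrow> 'a set \<Rightarrow> nat \<Rightarrow> 'a list \<Rightarrow> bool" where
  "ann_wins T S 0 u = rep_free u"
| "ann_wins T S (Suc k) u = (\<exists>x\<in>T. \<forall>y\<in>S. ann_wins T S k (u @ [x, y]))"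

lemma ben_refutes_all_words:
  assumes lost: "\<not> ann_wins T S N []"
  shows "\<exists>\<beta>. \<forall>r. set r \<subseteq> T \<and> length r = N \<longrightarrow> \<not> rep_free (respond \<beta> r)"
proof -
  define \<beta> where
    "\<beta> v = (SOME y. y \<in> S \<and> \<not> ann_wins T S (N - Suc (length v div 2)) (v @ [y]))" for v
  have still_lost: "set r \<subseteq> T \<and> length r \<le> N \<longrightarrow> \<not> ann_wins T S (N - length r) (respond \<beta> r)"
    for r
  proof (induction r rule: rev_induct)
    case (snoc x r)
    show ?case
    proof
      assume a: "set (r @ [x]) \<subseteq> T \<and> length (r @ [x]) \<le> N"
      let ?k = "N - Suc (length r)" and ?u = "respond \<beta> r @ [x]"
      have "length r < N" using a by simp
      then have "N - length r = Suc ?k" by (rule Suc_diff_Suc[symmetric])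
      moreover have "\<not> ann_wins T S (N - length r) (respond \<beta> r)" using snoc a by simp
      ultimately have "\<not> ann_wins T S (Suc ?k) (respond \<beta> r)" by simp
      then have "\<exists>y. y \<in> S \<and> \<not> ann_wins T S ?k (?u @ [y])" using a by auto
      moreover have "length ?u div 2 = length r" by simp
      ultimately have "\<not> ann_wins T S ?k (?u @ [\<beta> ?u])"
        unfolding \<beta>_def by (metis (mono_tags, lifting) someI_ex)
      then show "\<not> ann_wins T S (N - length (r @ [x])) (respond \<beta> (r @ [x]))" by simp
    qed
  qed (use lost in simp)
  show ?thesis
  proof (intro exI[of _ \<beta>] allI impI)
    fix r assume "set r \<subseteq> T \<and> length r = N"
    then show "\<not> rep_free (respond \<beta> r)" using still_lost[of r] by simp
  qed
qed

lemma length_play [simp]: "length (play ann ben k) = k"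
  by (induction k) (auto simp: Let_def)

lemma play_prefix: "n \<le> m \<Longrightarrow> play ann ben n = take n (play ann ben m)"
proof (induction m)
  case (Suc m)
  then show ?case by (cases "n \<le> m") (auto simp: Let_def le_Suc_eq)
qed simp

text \<open>A winning position for Ann yields a strategy: always pick a symbol of T
  that keeps the position winning.\<close>
lemma ann_strategy_from_win:
  assumes win: "ann_wins T S N []" and TS: "T \<subseteq> S" and T: "T \<noteq> {}"
  shows "\<exists>ann. (\<forall>h. ann h \<in> S) \<and>
           (\<forall>ben. (\<forall>h. ben h \<in> S) \<longrightarrow> rep_free (play ann ben (2 * N)))"
proof -
  define keeps_win where
    "keeps_win v x \<longleftrightarrow> (\<forall>y\<in>S. ann_wins T S (N - Suc (length v div 2)) (v @ [x, y]))" for v x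
  define ann where "ann v = (SOME x. x \<in> T \<and> ((\<exists>x'\<in>T. keeps_win v x') \<longrightarrow> keeps_win v x))" for v
  have ann: "ann v \<in> T \<and> ((\<exists>x'\<in>T. keeps_win v x') \<longrightarrow> keeps_win v (ann v))" for v
    unfolding ann_def by (rule someI_ex) (use T in blast)
  have rounds: "ann_wins T S (N - i) (play ann ben (2 * i))"
    if ben: "\<forall>h. ben h \<in> S" and "i \<le> N" for ben i
    using \<open>i \<le> N\<close>
  proof (induction i)
    case (Suc i)
    let ?h = "play ann ben (2 * i)"
    have "ann_wins T S (Suc (N - Suc i)) ?h" using Suc by (simp add: Suc_diff_Suc)
    then have "\<exists>x\<in>T. keeps_win ?h x" by (simp add: keeps_win_def)
    then have "keeps_win ?h (ann ?h)" using ann by blast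
    then show ?case using ben by (simp add: keeps_win_def Let_def)
  qed (use win in simp)
  show ?thesis
  proof (intro exI[of _ ann] conjI allI impI)
    show "ann h \<in> S" for h using ann TS by blast
    show "rep_free (play ann ben (2 * N))" if "\<forall>h. ben h \<in> S" for ben
      using rounds[OF that, of N] by simp
  qed
qed

theorem mainTheorem5:
  fixes S :: "'a set"
  assumes "infinite S \<or> 6 \<le> card S"
  shows "\<forall>n\<ge>1. \<exists>ann. (\<forall>h. ann h \<in> S) \<and>
           (\<forall>ben. (\<forall>h. ben h \<in> S) \<longrightarrow>
              (\<forall>k>1. \<not> has_repetition_of_size (play ann ben n) k))"
proof (intro allI impI)
  fix n :: nat
  obtain T where TS: "T \<subseteq> S" and card: "card T = 6" and fin: "finite T"
  proof (cases "finite S")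
    case False
    then show ?thesis using that infinite_arbitrarily_large by blast
  next
    case True
    then show ?thesis using that assms obtain_subset_with_card_n by blast
  qed
  have "ann_wins T S n []"
  proof (rule ccontr)
    assume "\<not> ann_wins T S n []"
    then obtain \<beta> where "\<forall>r. set r \<subseteq> T \<and> length r = n \<longrightarrow> \<not> rep_free (respond \<beta> r)"
      using ben_refutes_all_words by blast
    then show False using survivors_nonempty[OF fin, where \<beta> = \<beta> and N = n] card
      unfolding survivors_def by auto
  qed
  then obtain ann where "\<forall>h. ann h \<in> S"
    and "\<forall>ben. (\<forall>h. ben h \<in> S) \<longrightarrow> rep_free (play ann ben (2 * n))"
    using ann_strategy_from_win[OF _ TS] card by fastforce
  moreover have "rep_free (play ann ben (2 * n)) \<Longrightarrow> rep_free (play ann ben n)" for ben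
    using rep_free_take play_prefix[of n "2 * n" ann ben] by simp
  ultimately show "\<exists>ann. (\<forall>h. ann h \<in> S) \<and> (\<forall>ben. (\<forall>h. ben h \<in> S) \<longrightarrow>
      (\<forall>k>1. \<not> has_repetition_of_size (play ann ben n) k))"
    unfolding rep_free_def by blast
qed

end
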